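(* The scheme $\Upsilon$ is a commutative normal subgroup of $U_L$ and $U_L=U_\phi\ltimes\Upsilon$. Moreover, given $\beta=\alpha_{ij}\in\Phi(U_\phi)$, there exists a unique root $\alpha\in\Phi(\Upsilon)$ such that $\alpha+\beta$ is a root of $\mathrm{GL}_n$; explicitly $\alpha=\alpha_{pi}$ where $p\in\{1,\dots,d\}$ is determined by $p\equiv i\bmod d$, and then $\alpha+\beta=\alpha_{pj}$.
   Context: $G=\mathrm{GL}_n$ over a field, $1\le d\le n$, $\alpha_{ij}$ the root with root space $kE_{ij}$. $G_0=\{g\in\mathrm{GL}_n:g_{ij}=0\text{ unless }i\equiv j\bmod d\}$, $L$ a group identified with $G_0$ (the Levi quotient of the parahoric attached to $\check\rho/d$), and roots of $L$ are identified with the roots $\alpha_{ij}$, $i\equiv j\bmod d$, of $G_0$. $U_L$ is the unipotent radical of the upper triangular Borel of $L$, i.e. generated by the root subgroups $U_{\alpha_{ij}}$ with $i<j$, $i\equiv j\bmod d$. $U_\phi\subset U_L$ is the subgroup generated by the $U_\alpha$ with $\alpha\in\Phi(U_\phi)=\{\alpha_{ij}: d+1\le i\le n,\ i+d\le j\le n,\ j\equiv i\bmod d\}$, and $\Upsilon=\prod_{\alpha\in\Phi(\Upsilon)}U_\alpha$ with $\Phi(\Upsilon)=\{\alpha_{ij}:1\le i\le d,\ i+d\le j\le n,\ j\equiv i\bmod d\}$ (so $\Phi(\Upsilon)=\Phi(U_L)-\Phi(U_\phi)$). *)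

theory Defs
  imports "HOL-Algebra.Algebra" "HOL-Library.Product_Lexorder"
begin

text \<open>n x n matrices over a field are functions nat => nat => 'a, indexed by 1..n,
  and required to vanish outside {1..n} x {1..n}.\<close>

definition supp_ok :: "nat \<Rightarrow> (nat \<Rightarrow> nat \<Rightarrow> 'a::field) \<Rightarrow> bool" where
  "supp_ok n A \<longleftrightarrow> (\<forall>i j. \<not> (i \<in> {1..n} \<and> j \<in> {1..n}) \<longrightarrow> A i j = 0)"

definition mat_mul :: "nat \<Rightarrow> (nat \<Rightarrow> nat \<Rightarrow> 'a::field) \<Rightarrow> (nat \<Rightarrow> nat \<Rightarrow> 'a) \<Rightarrow> (nat \<Rightarrow> nat \<Rightarrow> 'a)" where
  "mat_mul n A B = (\<lambda>i j. if i \<in> {1..n} \<and> j \<in> {1..n} then (\<Sum>k=1..n. A i k * B k j) else 0)"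

definition mat_one :: "nat \<Rightarrow> (nat \<Rightarrow> nat \<Rightarrow> 'a::field)" where
  "mat_one n = (\<lambda>i j. if i = j \<and> i \<in> {1..n} then 1 else 0)"

definition GLn :: "nat \<Rightarrow> (nat \<Rightarrow> nat \<Rightarrow> 'a::field) monoid" where
  "GLn n = \<lparr> carrier = {A. supp_ok n A \<and> (\<exists>B. supp_ok n B \<and> mat_mul n A B = mat_one n \<and> mat_mul n B A = mat_one n)},
            monoid.mult = mat_mul n, one = mat_one n \<rparr>"

definition root_subgroup :: "nat \<Rightarrow> nat \<times> nat \<Rightarrow> (nat \<Rightarrow> nat \<Rightarrow> 'a::field) set" where
  "root_subgroup n ij = {(\<lambda>a b. mat_one n a b + (if (a, b) = ij then c else 0)) | c. True}"

text \<open>Roots alpha_ij = e_i - e_j of GL_n, as characters of the diagonal torus (Z-valued functions).\<close>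
definition root_char :: "nat \<times> nat \<Rightarrow> (nat \<Rightarrow> int)" where
  "root_char ij = (\<lambda>k. (if k = fst ij then 1 else 0) - (if k = snd ij then 1 else 0))"

definition roots_GL :: "nat \<Rightarrow> (nat \<Rightarrow> int) set" where
  "roots_GL n = {root_char (i, j) | i j. i \<in> {1..n} \<and> j \<in> {1..n} \<and> i \<noteq> j}"

definition Phi_UL :: "nat \<Rightarrow> nat \<Rightarrow> (nat \<times> nat) set" where
  "Phi_UL n d = {(i, j). 1 \<le> i \<and> i < j \<and> j \<le> n \<and> i mod d = j mod d}"

definition Phi_Uphi :: "nat \<Rightarrow> nat \<Rightarrow> (nat \<times> nat) set" where
  "Phi_Uphi n d = {(i, j). d + 1 \<le> i \<and> i \<le> n \<and> i + d \<le> j \<and> j \<le> n \<and> j mod d = i mod d}"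

definition Phi_Ups :: "nat \<Rightarrow> nat \<Rightarrow> (nat \<times> nat) set" where
  "Phi_Ups n d = {(i, j). 1 \<le> i \<and> i \<le> d \<and> i + d \<le> j \<and> j \<le> n \<and> j mod d = i mod d}"

definition U_L :: "nat \<Rightarrow> nat \<Rightarrow> (nat \<Rightarrow> nat \<Rightarrow> 'a::field) set" where
  "U_L n d = generate (GLn n) (\<Union> (root_subgroup n ` Phi_UL n d))"

definition U_phi :: "nat \<Rightarrow> nat \<Rightarrow> (nat \<Rightarrow> nat \<Rightarrow> 'a::field) set" where
  "U_phi n d = generate (GLn n) (\<Union> (root_subgroup n ` Phi_Uphi n d))"

definition Upsilon :: "nat \<Rightarrow> nat \<Rightarrow> (nat \<Rightarrow> nat \<Rightarrow> 'a::field) set" where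
  "Upsilon n d = foldr (\<lambda>ij S. set_mult (GLn n) (root_subgroup n ij) S)
                   (sorted_list_of_set (Phi_Ups n d)) {mat_one n}"

end

theory Submission
  imports Defs
begin

text \<open>
  All groups involved are pattern groups: for a set S of positions above the diagonal that is
  closed under (i, k), (k, j) \<mapsto> (i, j), the root subgroups U_alpha, alpha \<in> S, generate exactly
  the unipotent matrices whose off-diagonal entries are supported on S.  The rows of Phi(Upsilon)
  lie in {1..d} and its columns in {d+1..n}, so (A - 1)(B - 1) = 0 for A, B in Upsilon; hence
  AB = A + B - 1, Upsilon is commutative, and the product of its root subgroups in any order is
  already all of Upsilon.  Replacing the rows 1..d of a matrix in U_L by those of the identity is
  a homomorphism onto U_phi with kernel Upsilon, and those rows themselves form the Upsilon-factor
  of the decomposition.  For the roots, alpha_ab + alpha_ij is a root only if b = i or a = j; the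
  latter is impossible for a \<le> d < j, and the former together with a = b (mod d) pins down a.
\<close>

lemma sum_mat_one_left:
  fixes f :: "nat \<Rightarrow> 'a::field"
  assumes "i \<in> {1..n}"
  shows "(\<Sum>k=1..n. mat_one n i k * f k) = f i"
proof -
  have "(\<Sum>k=1..n. mat_one n i k * f k) = (\<Sum>k=1..n. if k = i then f i else 0)"
    by (rule sum.cong) (auto simp: mat_one_def)
  then show ?thesis using assms by simp
qed

lemma sum_mat_one_right:
  fixes f :: "nat \<Rightarrow> 'a::field"
  assumes "j \<in> {1..n}"
  shows "(\<Sum>k=1..n. f k * mat_one n k j) = f j"
proof -
  have "(\<Sum>k=1..n. f k * mat_one n k j) = (\<Sum>k=1..n. if k = j then f j else 0)"
    by (rule sum.cong) (auto simp: mat_one_def)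
  then show ?thesis using assms by simp
qed

lemma mat_one_outside: "\<not> (i \<in> {1..n} \<and> j \<in> {1..n}) \<Longrightarrow> mat_one n i j = 0"
  by (auto simp: mat_one_def)

lemma mat_mul_outside: "\<not> (i \<in> {1..n} \<and> j \<in> {1..n}) \<Longrightarrow> mat_mul n A B i j = 0"
  unfolding mat_mul_def by (rule if_not_P)

lemma supp_ok_mat_mul: "supp_ok n (mat_mul n A B)"
  by (auto simp: supp_ok_def mat_mul_def)

lemma supp_ok_mat_one: "supp_ok n (mat_one n)"
  by (simp add: supp_ok_def mat_one_outside)

lemma mat_mul_one_left: "supp_ok n A \<Longrightarrow> mat_mul n (mat_one n) A = A"
  using sum_mat_one_left[of _ n "\<lambda>k. A k _"] by (auto simp: fun_eq_iff mat_mul_def supp_ok_def)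

lemma mat_mul_assoc: "mat_mul n (mat_mul n A B) C = mat_mul n A (mat_mul n B C)"
proof (intro ext)
  fix i j
  show "mat_mul n (mat_mul n A B) C i j = mat_mul n A (mat_mul n B C) i j"
  proof (cases "i \<in> {1..n} \<and> j \<in> {1..n}")
    case True
    then have "mat_mul n (mat_mul n A B) C i j = (\<Sum>k=1..n. \<Sum>l=1..n. A i l * B l k * C k j)"
      by (simp add: mat_mul_def sum_distrib_right)
    also have "\<dots> = (\<Sum>l=1..n. \<Sum>k=1..n. A i l * B l k * C k j)"
      by (rule sum.swap)
    also have "\<dots> = mat_mul n A (mat_mul n B C) i j"
      using True by (simp add: mat_mul_def sum_distrib_left mult.assoc)
    finally show ?thesis .
  qed (simp add: mat_mul_outside)
qed

lemma mult_GLn [simp]: "x \<otimes>\<^bsub>GLn n\<^esub> y = mat_mul n x y"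
  by (simp add: GLn_def)

lemma one_GLn [simp]: "\<one>\<^bsub>GLn n\<^esub> = mat_one n"
  by (simp add: GLn_def)

lemma mem_set_mult_GLn: "x \<in> set_mult (GLn n) H K \<longleftrightarrow> (\<exists>h\<in>H. \<exists>k\<in>K. x = mat_mul n h k)"
  by (auto simp: set_mult_def)

lemma group_GLn: "group (GLn n :: (nat \<Rightarrow> nat \<Rightarrow> 'a::field) monoid)"
proof (rule groupI)
  fix x y :: "nat \<Rightarrow> nat \<Rightarrow> 'a"
  assume "x \<in> carrier (GLn n)" and "y \<in> carrier (GLn n)"
  then obtain x' y' where "supp_ok n x'" "mat_mul n x x' = mat_one n" "mat_mul n x' x = mat_one n"
    and "supp_ok n y'" "mat_mul n y y' = mat_one n" "mat_mul n y' y = mat_one n"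
    and "supp_ok n x" "supp_ok n y"
    by (auto simp: GLn_def)
  then have "mat_mul n (mat_mul n x y) (mat_mul n y' x') = mat_one n"
    and "mat_mul n (mat_mul n y' x') (mat_mul n x y) = mat_one n"
    by (metis mat_mul_assoc mat_mul_one_left)+
  then show "x \<otimes>\<^bsub>GLn n\<^esub> y \<in> carrier (GLn n)"
    by (auto simp: GLn_def supp_ok_mat_mul intro!: exI[of _ "mat_mul n y' x'"])
next
  show "\<one>\<^bsub>GLn n\<^esub> \<in> carrier (GLn n)"
    by (auto simp: GLn_def supp_ok_mat_one mat_mul_one_left intro!: exI[of _ "mat_one n"])
next
  fix x :: "nat \<Rightarrow> nat \<Rightarrow> 'a"
  assume "x \<in> carrier (GLn n)"
  then show "\<one>\<^bsub>GLn n\<^esub> \<otimes>\<^bsub>GLn n\<^esub> x = x"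
    and "\<exists>y\<in>carrier (GLn n). y \<otimes>\<^bsub>GLn n\<^esub> x = \<one>\<^bsub>GLn n\<^esub>"
    by (auto simp: GLn_def mat_mul_one_left)
qed (simp add: mat_mul_assoc)

section \<open>Pattern groups\<close>

definition root_elt :: "nat \<Rightarrow> nat \<times> nat \<Rightarrow> 'a::field \<Rightarrow> (nat \<Rightarrow> nat \<Rightarrow> 'a)" where
  "root_elt n ij c = (\<lambda>a b. mat_one n a b + (if (a, b) = ij then c else 0))"

lemma root_subgroup_eq_range: "root_subgroup n ij = range (root_elt n ij)"
  by (auto simp: root_subgroup_def root_elt_def)

definition upper_positions :: "nat \<Rightarrow> (nat \<times> nat) set" where
  "upper_positions n = {(i, j). 1 \<le> i \<and> i < j \<and> j \<le> n}"

lemma upper_positionsD: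
  "(i, j) \<in> upper_positions n \<Longrightarrow> i \<in> {1..n} \<and> j \<in> {1..n} \<and> i < j"
  by (simp add: upper_positions_def)

lemma finite_upper_positions: "finite (upper_positions n)"
  by (rule finite_subset[of _ "{1..n} \<times> {1..n}"]) (auto simp: upper_positions_def)

lemma mat_mul_root_elt_left:
  fixes M :: "nat \<Rightarrow> nat \<Rightarrow> 'a::field"
  assumes ij: "(i, j) \<in> upper_positions n" and M: "supp_ok n M"
    and row_j: "\<And>b. M j b = mat_one n j b"
  shows "mat_mul n (root_elt n (i, j) c) M = (\<lambda>a b. M a b + (if (a, b) = (i, j) then c else 0))"
proof (intro ext)
  fix a b
  have i: "i \<in> {1..n}" and j: "j \<in> {1..n}" and "i \<noteq> j"
    using upper_positionsD[OF ij] by auto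
  show "mat_mul n (root_elt n (i, j) c) M a b = M a b + (if (a, b) = (i, j) then c else 0)"
  proof (cases "a \<in> {1..n} \<and> b \<in> {1..n}")
    case True
    have "mat_mul n (root_elt n (i, j) c) M a b
        = (\<Sum>k=1..n. mat_one n a k * M k b + (if k = j then (if a = i then c * M j b else 0) else 0))"
      using True by (auto simp: mat_mul_def root_elt_def distrib_right intro!: sum.cong)
    also have "\<dots> = (\<Sum>k=1..n. mat_one n a k * M k b) + (if a = i then c * M j b else 0)"
      using j by (simp add: sum.distrib)
    also have "\<dots> = M a b + (if (a, b) = (i, j) then c else 0)"
      using True sum_mat_one_left[of a n "\<lambda>k. M k b"] row_j[of b] \<open>i \<noteq> j\<close>
      by (auto simp: mat_one_def)
    finally show ?thesis .
  next
    case False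
    then show ?thesis using M i j by (auto simp: mat_mul_def supp_ok_def)
  qed
qed

lemma supp_ok_root_elt: "(i, j) \<in> upper_positions n \<Longrightarrow> supp_ok n (root_elt n (i, j) c)"
  by (auto simp: supp_ok_def root_elt_def mat_one_def upper_positions_def)

lemma root_elt_mult_neg:
  assumes "(i, j) \<in> upper_positions n"
  shows "mat_mul n (root_elt n (i, j) c) (root_elt n (i, j) (- c)) = mat_one n"
proof -
  have "mat_mul n (root_elt n (i, j) c) (root_elt n (i, j) (- c))
      = (\<lambda>a b. root_elt n (i, j) (- c) a b + (if (a, b) = (i, j) then c else 0))"
    using assms
    by (intro mat_mul_root_elt_left supp_ok_root_elt) (auto simp: root_elt_def upper_positions_def)
  then show ?thesis by (simp add: root_elt_def fun_eq_iff)
qed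

lemma root_elt_in_GLn:
  assumes "(i, j) \<in> upper_positions n"
  shows "root_elt n (i, j) (c::'a::field) \<in> carrier (GLn n)"
  using root_elt_mult_neg[OF assms, of c] root_elt_mult_neg[OF assms, of "-c"] supp_ok_root_elt[OF assms]
  by (auto simp: GLn_def)

lemma inv_root_elt:
  assumes "(i, j) \<in> upper_positions n"
  shows "inv\<^bsub>GLn n\<^esub> (root_elt n (i, j) (c::'a::field)) = root_elt n (i, j) (- c)"
  using root_elt_mult_neg[OF assms, of "-c"] root_elt_in_GLn[OF assms]
  by (intro group.inv_equality[OF group_GLn]) auto

definition pattern_group :: "nat \<Rightarrow> (nat \<times> nat) set \<Rightarrow> (nat \<Rightarrow> nat \<Rightarrow> 'a::field) set" where
  "pattern_group n S = {A. supp_ok n A \<and> (\<forall>i\<in>{1..n}. A i i = 1)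
                            \<and> (\<forall>i j. i \<noteq> j \<longrightarrow> A i j \<noteq> 0 \<longrightarrow> (i, j) \<in> S)}"

lemma pattern_groupI:
  assumes "\<And>i j. \<not> (i \<in> {1..n} \<and> j \<in> {1..n}) \<Longrightarrow> A i j = 0"
    and "\<And>i. i \<in> {1..n} \<Longrightarrow> A i i = 1"
    and "\<And>i j. i \<noteq> j \<Longrightarrow> A i j \<noteq> 0 \<Longrightarrow> (i, j) \<in> S"
  shows "A \<in> pattern_group n S"
  using assms unfolding pattern_group_def supp_ok_def by blast

lemma pattern_group_supp_ok: "A \<in> pattern_group n S \<Longrightarrow> supp_ok n A"
  unfolding pattern_group_def by blast

lemma pattern_group_outside:
  "A \<in> pattern_group n S \<Longrightarrow> \<not> (i \<in> {1..n} \<and> j \<in> {1..n}) \<Longrightarrow> A i j = 0"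
  unfolding pattern_group_def supp_ok_def by blast

lemma pattern_group_diag: "A \<in> pattern_group n S \<Longrightarrow> i \<in> {1..n} \<Longrightarrow> A i i = 1"
  unfolding pattern_group_def by blast

lemma pattern_group_off_diag: "A \<in> pattern_group n S \<Longrightarrow> i \<noteq> j \<Longrightarrow> A i j \<noteq> 0 \<Longrightarrow> (i, j) \<in> S"
  unfolding pattern_group_def by blast

lemma pattern_group_row:
  assumes A: "A \<in> pattern_group n S" and j: "j \<notin> Domain S"
  shows "A j b = mat_one n j b"
proof (cases "j = b")
  case True
  show ?thesis
  proof (cases "j \<in> {1..n}")
    case True
    then show ?thesis using \<open>j = b\<close> pattern_group_diag[OF A] by (simp add: mat_one_def)
  next
    case False
    then have "\<not> (j \<in> {1..n} \<and> b \<in> {1..n})" by blast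
    then show ?thesis using pattern_group_outside[OF A] mat_one_outside by metis
  qed
next
  case False
  have "(j, b) \<notin> S" using j by blast
  then have "A j b = 0" using pattern_group_off_diag[OF A False] by blast
  then show ?thesis using False by (simp add: mat_one_def)
qed

lemma mat_one_in_pattern_group: "mat_one n \<in> pattern_group n S"
  by (rule pattern_groupI) (auto simp: mat_one_def)

lemma pattern_group_empty: "pattern_group n {} = {mat_one n}"
proof -
  have "A = mat_one n" if "A \<in> pattern_group n {}" for A :: "nat \<Rightarrow> nat \<Rightarrow> 'a::field"
    using pattern_group_row[OF that] by blast
  then show ?thesis using mat_one_in_pattern_group by blast
qed

lemma pattern_group_mono: "S \<subseteq> T \<Longrightarrow> pattern_group n S \<subseteq> pattern_group n T"
  by (auto simp: pattern_group_def)

lemma pattern_group_Int: "pattern_group n (S \<inter> T) = pattern_group n S \<inter> pattern_group n T"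
  by (auto simp: pattern_group_def)

lemma root_elt_in_pattern_group:
  "(i, j) \<in> S \<Longrightarrow> S \<subseteq> upper_positions n \<Longrightarrow> root_elt n (i, j) c \<in> pattern_group n S"
  using supp_ok_root_elt[of i j n c]
  by (auto simp: pattern_group_def root_elt_def mat_one_def upper_positions_def)

lemma pattern_group_mult_diag_term:
  assumes S: "S \<subseteq> upper_positions n"
    and A: "A \<in> pattern_group n S" and B: "B \<in> pattern_group n S" and "i \<noteq> k"
  shows "A i k * B k i = 0"
proof (rule ccontr)
  assume "A i k * B k i \<noteq> 0"
  then have "(i, k) \<in> S" and "(k, i) \<in> S"
    using pattern_group_off_diag[OF A \<open>i \<noteq> k\<close>] pattern_group_off_diag[OF B \<open>i \<noteq> k\<close>[symmetric]]
    by simp_all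
  then have "i < k" and "k < i" using S upper_positionsD by blast+
  then show False by simp
qed

lemma pattern_group_mult:
  assumes S: "S \<subseteq> upper_positions n" "trans S"
    and A: "A \<in> pattern_group n S" and B: "B \<in> pattern_group n S"
  shows "mat_mul n A B \<in> pattern_group n S"
proof (rule pattern_groupI)
  fix i assume i: "i \<in> {1..n}"
  have "A i k * B k i = (if k = i then 1 else 0)" if k: "k \<in> {1..n}" for k
    using pattern_group_diag[OF A k] pattern_group_diag[OF B k] pattern_group_mult_diag_term[OF S(1) A B, of i k]
    by auto
  then have "(\<Sum>k=1..n. A i k * B k i) = (\<Sum>k=1..n. if k = i then 1 else 0)"
    by (rule sum.cong[OF refl])
  then show "mat_mul n A B i i = 1" using i by (simp add: mat_mul_def)
next
  fix i j assume "i \<noteq> j" and "mat_mul n A B i j \<noteq> 0"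
  then have "(\<Sum>k=1..n. A i k * B k j) \<noteq> 0" by (simp add: mat_mul_def split: if_splits)
  then obtain k where "A i k * B k j \<noteq> 0" by (blast intro: sum.not_neutral_contains_not_neutral)
  then have Aik: "A i k \<noteq> 0" and Bkj: "B k j \<noteq> 0" by simp_all
  consider "k = i" | "k = j" | "k \<noteq> i" "k \<noteq> j" by blast
  then show "(i, j) \<in> S"
  proof cases
    case 1
    then show ?thesis using pattern_group_off_diag[OF B \<open>i \<noteq> j\<close>] Bkj by simp
  next
    case 2
    then show ?thesis using pattern_group_off_diag[OF A \<open>i \<noteq> j\<close>] Aik by simp
  next
    case 3
    then have "(i, k) \<in> S" and "(k, j) \<in> S"
      using pattern_group_off_diag[OF A _ Aik] pattern_group_off_diag[OF B _ Bkj] by simp_all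
    then show ?thesis by (rule transD[OF S(2)])
  qed
qed (rule mat_mul_outside)

lemma set_mult_root_subgroup_pattern_group:
  assumes ij: "(i, j) \<in> upper_positions n" and j: "j \<notin> Domain L"
  shows "set_mult (GLn n) (root_subgroup n (i, j)) (pattern_group n L :: (nat \<Rightarrow> nat \<Rightarrow> 'a::field) set)
       = pattern_group n (insert (i, j) L)"
proof -
  have "i \<noteq> j" using ij by (simp add: upper_positions_def)
  have root_elt_mult: "mat_mul n (root_elt n (i, j) c) M = (\<lambda>a b. M a b + (if (a, b) = (i, j) then c else 0))"
    if "M \<in> pattern_group n L" for M :: "nat \<Rightarrow> nat \<Rightarrow> 'a" and c
    using mat_mul_root_elt_left[OF ij pattern_group_supp_ok[OF that] pattern_group_row[OF that j]] .
  show ?thesis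
  proof (intro equalityI subsetI)
    fix x :: "nat \<Rightarrow> nat \<Rightarrow> 'a"
    assume "x \<in> set_mult (GLn n) (root_subgroup n (i, j)) (pattern_group n L)"
    then obtain c M where M: "M \<in> pattern_group n L" and x: "x = mat_mul n (root_elt n (i, j) c) M"
      unfolding mem_set_mult_GLn root_subgroup_eq_range by blast
    show "x \<in> pattern_group n (insert (i, j) L)"
      unfolding x root_elt_mult[OF M] using upper_positionsD[OF ij] pattern_group_off_diag[OF M]
      by (intro pattern_groupI) (auto simp: pattern_group_diag[OF M] pattern_group_outside[OF M] split: if_splits)
  next
    fix A :: "nat \<Rightarrow> nat \<Rightarrow> 'a" assume A: "A \<in> pattern_group n (insert (i, j) L)"
    define A' where "A' = (\<lambda>a b. if (a, b) = (i, j) then 0 else A a b)"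
    have A': "A' \<in> pattern_group n L"
      using \<open>i \<noteq> j\<close> pattern_group_off_diag[OF A] unfolding A'_def
      by (intro pattern_groupI) (auto simp: pattern_group_diag[OF A] pattern_group_outside[OF A] split: if_splits)
    have "mat_mul n (root_elt n (i, j) (A i j)) A' = A"
      unfolding root_elt_mult[OF A'] by (simp add: A'_def fun_eq_iff)
    moreover have "mat_mul n (root_elt n (i, j) (A i j)) A' \<in> set_mult (GLn n) (root_subgroup n (i, j)) (pattern_group n L)"
      unfolding mem_set_mult_GLn root_subgroup_eq_range
      by (intro bexI[of _ "root_elt n (i, j) (A i j)"] bexI[of _ A'] refl A' rangeI)
    ultimately show "A \<in> set_mult (GLn n) (root_subgroup n (i, j)) (pattern_group n L)"
      by simp
  qed
qed

lemma root_subgroups_subset_GLn: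
  "S \<subseteq> upper_positions n \<Longrightarrow> (\<Union> (root_subgroup n ` S) :: (nat \<Rightarrow> nat \<Rightarrow> 'a::field) set) \<subseteq> carrier (GLn n)"
proof
  fix x assume "x \<in> \<Union> (root_subgroup n ` S)" and "S \<subseteq> upper_positions n"
  then obtain i j c where "(i, j) \<in> upper_positions n" and "x = root_elt n (i, j) c"
    by (auto simp: root_subgroup_eq_range)
  then show "x \<in> carrier (GLn n)" by (simp add: root_elt_in_GLn)
qed

lemma pattern_group_subset_generate:
  assumes "S \<subseteq> upper_positions n"
  shows "pattern_group n S \<subseteq> generate (GLn n) (\<Union> (root_subgroup n ` S) :: (nat \<Rightarrow> nat \<Rightarrow> 'a::field) set)"
  using finite_subset[OF assms finite_upper_positions] assms
proof (induction S rule: finite_remove_induct)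
  case empty
  then show ?case using generate.one[of "GLn n"] by (simp add: pattern_group_empty)
next
  case (remove S)
  \<comment> \<open>Split off the entry in the lowest row i of S: its column j > i is not a row of S.\<close>
  define i where "i = Max (Domain S)"
  have "i \<in> Domain S" unfolding i_def using remove.hyps by (intro Max_in) (auto simp: finite_Domain)
  then obtain j where ij: "(i, j) \<in> S" by blast
  have "(i, j) \<in> upper_positions n" using ij remove.prems by blast
  then have "j \<notin> Domain S"
    using Max_ge[OF finite_Domain[OF \<open>finite S\<close>], of j] unfolding i_def[symmetric]
    by (auto simp: upper_positions_def)
  then have "j \<notin> Domain (S - {(i, j)})" by blast
  from set_mult_root_subgroup_pattern_group[OF \<open>(i, j) \<in> upper_positions n\<close> this]
  have decomp: "set_mult (GLn n) (root_subgroup n (i, j)) (pattern_group n (S - {(i, j)})) = pattern_group n S"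
    using ij by (simp add: insert_absorb)
  let ?gen = "generate (GLn n) (\<Union> (root_subgroup n ` S) :: (nat \<Rightarrow> nat \<Rightarrow> 'a) set)"
  have "root_subgroup n (i, j) \<subseteq> ?gen" using ij by (auto intro: generate.incl)
  moreover have "pattern_group n (S - {(i, j)}) \<subseteq> ?gen"
    using remove.IH[OF ij] remove.prems group.mono_generate[OF group_GLn, of "\<Union> (root_subgroup n ` (S - {(i, j)}))"]
    by blast
  ultimately have "mat_mul n h k \<in> ?gen" if "h \<in> root_subgroup n (i, j)" "k \<in> pattern_group n (S - {(i, j)})" for h k
    using generate.eng[of h "GLn n" _ k] that by auto
  then show ?case
    unfolding decomp[symmetric] subset_iff mem_set_mult_GLn by blast
qed

lemma generate_subset_pattern_group:
  assumes S: "S \<subseteq> upper_positions n" "trans S"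
  shows "generate (GLn n) (\<Union> (root_subgroup n ` S) :: (nat \<Rightarrow> nat \<Rightarrow> 'a::field) set) \<subseteq> pattern_group n S"
proof
  fix x :: "nat \<Rightarrow> nat \<Rightarrow> 'a" assume "x \<in> generate (GLn n) (\<Union> (root_subgroup n ` S))"
  then show "x \<in> pattern_group n S"
  proof (induction rule: generate.induct)
    case one
    then show ?case by (simp add: mat_one_in_pattern_group)
  next
    case (incl h)
    then obtain i j c where "(i, j) \<in> S" and "h = root_elt n (i, j) c"
      by (auto simp: root_subgroup_eq_range)
    then show ?case using S(1) by (simp add: root_elt_in_pattern_group)
  next
    case (inv h)
    then obtain i j c where ij: "(i, j) \<in> S" and "h = root_elt n (i, j) c"
      by (auto simp: root_subgroup_eq_range)
    moreover have "(i, j) \<in> upper_positions n" using ij S(1) by blast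
    ultimately show ?case using S(1) by (simp add: inv_root_elt root_elt_in_pattern_group)
  next
    case (eng h1 h2)
    then show ?case using pattern_group_mult[OF S] by simp
  qed
qed

lemma generate_root_subgroups_eq_pattern_group:
  assumes "S \<subseteq> upper_positions n" "trans S"
  shows "generate (GLn n) (\<Union> (root_subgroup n ` S)) = (pattern_group n S :: (nat \<Rightarrow> nat \<Rightarrow> 'a::field) set)"
  using generate_subset_pattern_group[OF assms] pattern_group_subset_generate[OF assms(1)] by blast

lemma subgroup_pattern_group:
  assumes "S \<subseteq> upper_positions n" "trans S"
  shows "subgroup (pattern_group n S :: (nat \<Rightarrow> nat \<Rightarrow> 'a::field) set) (GLn n)"
  using group.generate_is_subgroup[OF group_GLn root_subgroups_subset_GLn[OF assms(1)]]
  by (simp add: generate_root_subgroups_eq_pattern_group[OF assms])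

section \<open>Square-zero patterns\<close>

lemma trans_if_Domain_Int_Range_empty: "Domain S \<inter> Range S = {} \<Longrightarrow> trans S"
  unfolding trans_def by blast

lemma pattern_group_mult_eq_add:
  assumes S: "Domain S \<inter> Range S = {}"
    and A: "A \<in> pattern_group n S" and B: "B \<in> pattern_group n S"
  shows "mat_mul n A B = (\<lambda>i j. A i j + B i j - mat_one n i j)"
proof (intro ext)
  fix i j
  show "mat_mul n A B i j = A i j + B i j - mat_one n i j"
  proof (cases "i \<in> {1..n} \<and> j \<in> {1..n}")
    case True
    have "A i k * B k j = (if k = i then B i j else 0) + (if k = j then (if i = j then 0 else A i j) else 0)"
      if k: "k \<in> {1..n}" for k
    proof (cases "k = i")
      case True
      then show ?thesis using pattern_group_diag[OF A k] by simp
    next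
      case ki: False
      show ?thesis
      proof (cases "A i k = 0")
        case False
        then have "(i, k) \<in> S" using pattern_group_off_diag[OF A] ki by metis
        then have "k \<notin> Domain S" using S by blast
        then have "B k j = mat_one n k j" by (rule pattern_group_row[OF B])
        then show ?thesis using ki k by (simp add: mat_one_def)
      qed (use ki in auto)
    qed
    then have "mat_mul n A B i j
        = (\<Sum>k=1..n. (if k = i then B i j else 0) + (if k = j then (if i = j then 0 else A i j) else 0))"
      using True by (simp add: mat_mul_def)
    also have "\<dots> = B i j + (if i = j then 0 else A i j)"
      using True by (simp add: sum.distrib)
    also have "\<dots> = A i j + B i j - mat_one n i j"
      using True pattern_group_diag[OF A] by (simp add: mat_one_def)
    finally show ?thesis .
  next
    case False
    then show ?thesis
      by (simp add: mat_mul_outside mat_one_outside pattern_group_outside[OF A] pattern_group_outside[OF B])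
  qed
qed

lemma pattern_group_mult_commute:
  assumes "Domain S \<inter> Range S = {}" "A \<in> pattern_group n S" "B \<in> pattern_group n S"
  shows "mat_mul n A B = mat_mul n B A"
  unfolding pattern_group_mult_eq_add[OF assms] pattern_group_mult_eq_add[OF assms(1,3,2)]
  by (simp add: add.commute)

lemma foldr_set_mult_root_subgroups:
  assumes S: "S \<subseteq> upper_positions n" "Domain S \<inter> Range S = {}"
  shows "set xs \<subseteq> S \<Longrightarrow> foldr (\<lambda>ij T. set_mult (GLn n) (root_subgroup n ij) T) xs {mat_one n}
           = (pattern_group n (set xs) :: (nat \<Rightarrow> nat \<Rightarrow> 'a::field) set)"
proof (induction xs)
  case Nil
  then show ?case by (simp add: pattern_group_empty)
next
  case (Cons ij xs)
  obtain i j where ij: "ij = (i, j)" by force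
  have "(i, j) \<in> upper_positions n" and "j \<notin> Domain (set xs)"
    using Cons.prems S ij by auto
  then show ?case
    using Cons set_mult_root_subgroup_pattern_group[of i j n "set xs"] ij by simp
qed

section \<open>Splitting off the first d rows\<close>

definition bottom_rows :: "nat \<Rightarrow> nat \<Rightarrow> (nat \<Rightarrow> nat \<Rightarrow> 'a::field) \<Rightarrow> (nat \<Rightarrow> nat \<Rightarrow> 'a)" where
  "bottom_rows n d A = (\<lambda>i j. if i \<le> d then mat_one n i j else A i j)"

definition top_rows :: "nat \<Rightarrow> nat \<Rightarrow> (nat \<Rightarrow> nat \<Rightarrow> 'a::field) \<Rightarrow> (nat \<Rightarrow> nat \<Rightarrow> 'a)" where
  "top_rows n d A = (\<lambda>i j. if i \<le> d then A i j else mat_one n i j)"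

lemma bottom_rows_in_pattern_group:
  assumes A: "A \<in> pattern_group n S"
  shows "bottom_rows n d A \<in> pattern_group n {(i, j) \<in> S. d < i}"
  using pattern_group_off_diag[OF A]
  by (intro pattern_groupI)
    (auto simp: bottom_rows_def mat_one_def pattern_group_diag[OF A] pattern_group_outside[OF A]
          split: if_splits)

lemma top_rows_in_pattern_group:
  assumes A: "A \<in> pattern_group n S"
  shows "top_rows n d A \<in> pattern_group n {(i, j) \<in> S. i \<le> d}"
  using pattern_group_off_diag[OF A]
  by (intro pattern_groupI)
    (auto simp: top_rows_def mat_one_def pattern_group_diag[OF A] pattern_group_outside[OF A]
          split: if_splits)

lemma pattern_group_nonzero_le:
  assumes "S \<subseteq> upper_positions n" "A \<in> pattern_group n S" "A i k \<noteq> 0"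
  shows "i \<le> k"
proof (cases "i = k")
  case False
  then have "(i, k) \<in> upper_positions n" using assms pattern_group_off_diag by blast
  then show ?thesis by (simp add: upper_positions_def)
qed simp

lemma sum_row_cong_beyond:
  assumes S: "S \<subseteq> upper_positions n" and A: "A \<in> pattern_group n S" and "d < i"
    and fg: "\<And>k. d < k \<Longrightarrow> f k = g k"
  shows "(\<Sum>k=1..n. A i k * f k) = (\<Sum>k=1..n. A i k * g k)"
proof (rule sum.cong[OF refl])
  fix k
  show "A i k * f k = A i k * g k"
    using pattern_group_nonzero_le[OF S A, of i k] \<open>d < i\<close> fg[of k] by fastforce
qed

lemma bottom_rows_mult_top_rows:
  assumes S: "S \<subseteq> upper_positions n" and A: "A \<in> pattern_group n S"
  shows "mat_mul n (bottom_rows n d A) (top_rows n d A) = A"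
proof (intro ext)
  fix i j
  show "mat_mul n (bottom_rows n d A) (top_rows n d A) i j = A i j"
  proof (cases "i \<in> {1..n} \<and> j \<in> {1..n}")
    case True
    show ?thesis
    proof (cases "i \<le> d")
      case True
      then show ?thesis using \<open>i \<in> {1..n} \<and> j \<in> {1..n}\<close> sum_mat_one_left[of i n "\<lambda>k. top_rows n d A k j"]
        by (simp add: mat_mul_def bottom_rows_def top_rows_def)
    next
      case False
      then have "mat_mul n (bottom_rows n d A) (top_rows n d A) i j = (\<Sum>k=1..n. A i k * top_rows n d A k j)"
        using True by (simp add: mat_mul_def bottom_rows_def)
      also have "\<dots> = (\<Sum>k=1..n. A i k * mat_one n k j)"
        using False by (intro sum_row_cong_beyond[OF S A, where d = d]) (auto simp: top_rows_def)
      also have "\<dots> = A i j" using True sum_mat_one_right[of j n "\<lambda>k. A i k"] by simp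
      finally show ?thesis .
    qed
  next
    case False
    then show ?thesis by (simp add: pattern_group_outside[OF A] mat_mul_outside)
  qed
qed

lemma bottom_rows_mat_mul:
  assumes S: "S \<subseteq> upper_positions n" and A: "A \<in> pattern_group n S"
  shows "bottom_rows n d (mat_mul n A B) = mat_mul n (bottom_rows n d A) (bottom_rows n d B)"
proof (intro ext)
  fix i j
  show "bottom_rows n d (mat_mul n A B) i j = mat_mul n (bottom_rows n d A) (bottom_rows n d B) i j"
  proof (cases "i \<in> {1..n} \<and> j \<in> {1..n}")
    case True
    show ?thesis
    proof (cases "i \<le> d")
      case True
      then show ?thesis using \<open>i \<in> {1..n} \<and> j \<in> {1..n}\<close> sum_mat_one_left[of i n "\<lambda>k. bottom_rows n d B k j"]
        by (simp add: mat_mul_def bottom_rows_def)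
    next
      case False
      then have "mat_mul n (bottom_rows n d A) (bottom_rows n d B) i j = (\<Sum>k=1..n. A i k * bottom_rows n d B k j)"
        using True by (simp add: mat_mul_def bottom_rows_def)
      also have "\<dots> = (\<Sum>k=1..n. A i k * B k j)"
        using False by (intro sum_row_cong_beyond[OF S A, where d = d]) (auto simp: bottom_rows_def)
      also have "\<dots> = bottom_rows n d (mat_mul n A B) i j"
        using True False by (simp add: bottom_rows_def mat_mul_def)
      finally show ?thesis by simp
    qed
  next
    case False
    then show ?thesis by (simp add: bottom_rows_def mat_mul_outside mat_one_outside)
  qed
qed

lemma bottom_rows_eq_one_iff:
  assumes A: "A \<in> pattern_group n S"
  shows "bottom_rows n d A = mat_one n \<longleftrightarrow> A \<in> pattern_group n {(i, j) \<in> S. i \<le> d}"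
proof
  assume bottom: "bottom_rows n d A = mat_one n"
  have "(i, j) \<in> S \<and> i \<le> d" if "i \<noteq> j" "A i j \<noteq> 0" for i j
  proof
    show "(i, j) \<in> S" using pattern_group_off_diag[OF A that] .
    show "i \<le> d"
    proof (rule ccontr)
      assume "\<not> i \<le> d"
      then have "A i j = mat_one n i j" using fun_cong[OF fun_cong[OF bottom, of i], of j]
        by (simp add: bottom_rows_def)
      then show False using that by (simp add: mat_one_def)
    qed
  qed
  then show "A \<in> pattern_group n {(i, j) \<in> S. i \<le> d}"
    by (intro pattern_groupI) (auto simp: pattern_group_diag[OF A] pattern_group_outside[OF A])
next
  assume "A \<in> pattern_group n {(i, j) \<in> S. i \<le> d}"
  then have "A i j = mat_one n i j" if "\<not> i \<le> d" for i j
    using that by (intro pattern_group_row) auto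
  then show "bottom_rows n d A = mat_one n"
    by (simp add: bottom_rows_def fun_eq_iff)
qed

lemma top_rows_pattern_group_normal:
  assumes S: "S \<subseteq> upper_positions n" "trans S"
  shows "(pattern_group n {(i, j) \<in> S. i \<le> d} :: (nat \<Rightarrow> nat \<Rightarrow> 'a::field) set)
           \<lhd> GLn n\<lparr>carrier := pattern_group n S\<rparr>"
proof -
  let ?P = "GLn n\<lparr>carrier := pattern_group n S\<rparr> :: (nat \<Rightarrow> nat \<Rightarrow> 'a) monoid"
  have sub: "subgroup (pattern_group n S) (GLn n :: (nat \<Rightarrow> nat \<Rightarrow> 'a) monoid)"
    by (rule subgroup_pattern_group[OF S])
  have "bottom_rows n d \<in> hom ?P (GLn n)"
  proof (rule homI)
    fix A assume "A \<in> carrier ?P"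
    then have bottom: "bottom_rows n d A \<in> pattern_group n {(i, j) \<in> S. d < i}"
      by (simp add: bottom_rows_in_pattern_group)
    have "bottom_rows n d A \<in> pattern_group n S" by (rule subsetD[OF pattern_group_mono bottom]) blast
    then show "bottom_rows n d A \<in> carrier (GLn n)" by (rule subgroup.mem_carrier[OF sub])
  next
    fix A B assume "A \<in> carrier ?P"
    then have "A \<in> pattern_group n S" by simp
    then show "bottom_rows n d (A \<otimes>\<^bsub>?P\<^esub> B) = bottom_rows n d A \<otimes>\<^bsub>GLn n\<^esub> bottom_rows n d B"
      by (simp add: bottom_rows_mat_mul[OF S(1)])
  qed
  then have hom: "group_hom ?P (GLn n) (bottom_rows n d)"
    using subgroup.subgroup_is_group[OF sub group_GLn] group_GLn
    unfolding group_hom_def group_hom_axioms_def by blast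
  have kernel: "kernel ?P (GLn n) (bottom_rows n d) = pattern_group n {(i, j) \<in> S. i \<le> d}"
  proof (intro equalityI subsetI)
    fix A assume "A \<in> kernel ?P (GLn n) (bottom_rows n d)"
    then have A: "A \<in> pattern_group n S" and "bottom_rows n d A = mat_one n"
      by (simp_all add: kernel_def)
    then show "A \<in> pattern_group n {(i, j) \<in> S. i \<le> d}"
      using bottom_rows_eq_one_iff[OF A] by simp
  next
    fix A :: "nat \<Rightarrow> nat \<Rightarrow> 'a" assume A: "A \<in> pattern_group n {(i, j) \<in> S. i \<le> d}"
    have "A \<in> pattern_group n S" by (rule subsetD[OF pattern_group_mono A]) blast
    with A show "A \<in> kernel ?P (GLn n) (bottom_rows n d)"
      by (simp add: kernel_def bottom_rows_eq_one_iff)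
  qed
  show ?thesis using group_hom.normal_kernel[OF hom] unfolding kernel .
qed

lemma set_mult_bottom_top_pattern_groups:
  assumes S: "S \<subseteq> upper_positions n" "trans S"
  shows "set_mult (GLn n) (pattern_group n {(i, j) \<in> S. d < i}) (pattern_group n {(i, j) \<in> S. i \<le> d})
       = (pattern_group n S :: (nat \<Rightarrow> nat \<Rightarrow> 'a::field) set)"
proof (intro equalityI subsetI)
  fix A :: "nat \<Rightarrow> nat \<Rightarrow> 'a"
  assume "A \<in> set_mult (GLn n) (pattern_group n {(i, j) \<in> S. d < i}) (pattern_group n {(i, j) \<in> S. i \<le> d})"
  then obtain B C where B: "B \<in> pattern_group n {(i, j) \<in> S. d < i}"
    and C: "C \<in> pattern_group n {(i, j) \<in> S. i \<le> d}" and A: "A = mat_mul n B C"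
    unfolding mem_set_mult_GLn by blast
  have "B \<in> pattern_group n S" by (rule subsetD[OF pattern_group_mono B]) blast
  moreover have "C \<in> pattern_group n S" by (rule subsetD[OF pattern_group_mono C]) blast
  ultimately show "A \<in> pattern_group n S" unfolding A by (rule pattern_group_mult[OF S])
next
  fix A :: "nat \<Rightarrow> nat \<Rightarrow> 'a" assume A: "A \<in> pattern_group n S"
  have "A = mat_mul n (bottom_rows n d A) (top_rows n d A)"
    by (rule bottom_rows_mult_top_rows[OF S(1) A, symmetric])
  then show "A \<in> set_mult (GLn n) (pattern_group n {(i, j) \<in> S. d < i}) (pattern_group n {(i, j) \<in> S. i \<le> d})"
    unfolding mem_set_mult_GLn using bottom_rows_in_pattern_group[OF A] top_rows_in_pattern_group[OF A] by blast
qed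

lemma bottom_Int_top_pattern_groups:
  "pattern_group n {(i, j) \<in> S. d < i} \<inter> pattern_group n {(i, j) \<in> S. i \<le> d} = {mat_one n}"
proof -
  have "{(i, j) \<in> S. d < i} \<inter> {(i, j) \<in> S. i \<le> d} = {}" by auto
  then show ?thesis by (simp add: pattern_group_Int[symmetric] pattern_group_empty)
qed

lemma add_le_if_less_mod_eq:
  fixes a b d :: nat
  assumes "a < b" and "a mod d = b mod d"
  shows "a + d \<le> b"
proof -
  have "d dvd b - a" using assms mod_eq_dvd_iff_nat[of a b d] by simp
  then have "d \<le> b - a" using assms(1) by (intro dvd_imp_le) auto
  then show ?thesis using assms(1) by simp
qed

lemma inj_on_mod_atLeastAtMost: "inj_on (\<lambda>a::nat. a mod d) {1..d}"
proof (rule inj_onI)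
  fix a b :: nat
  assume "a \<in> {1..d}" "b \<in> {1..d}" and eq: "a mod d = b mod d"
  then show "a = b"
    using add_le_if_less_mod_eq[OF _ eq] add_le_if_less_mod_eq[OF _ eq[symmetric]]
    by (cases a b rule: linorder_cases) auto
qed

lemma ex_mod_representative: "1 \<le> d \<Longrightarrow> \<exists>p\<in>{1..d}. p mod d = i mod (d::nat)"
  by (rule bexI[of _ "if i mod d = 0 then d else i mod d"])
    (auto simp: Suc_le_eq dest: mod_less_divisor[of d i])

lemma Phi_UL_subset_upper_positions: "Phi_UL n d \<subseteq> upper_positions n"
  by (auto simp: Phi_UL_def upper_positions_def)

lemma Phi_Uphi_subset_upper_positions: "1 \<le> d \<Longrightarrow> Phi_Uphi n d \<subseteq> upper_positions n"
  by (auto simp: Phi_Uphi_def upper_positions_def)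

lemma Phi_Ups_subset_upper_positions: "1 \<le> d \<Longrightarrow> Phi_Ups n d \<subseteq> upper_positions n"
  by (auto simp: Phi_Ups_def upper_positions_def)

lemma trans_Phi_UL: "trans (Phi_UL n d)"
  unfolding trans_def Phi_UL_def by auto

lemma trans_Phi_Uphi: "trans (Phi_Uphi n d)"
  unfolding trans_def Phi_Uphi_def by auto

lemma Domain_Int_Range_Phi_Ups: "Domain (Phi_Ups n d) \<inter> Range (Phi_Ups n d) = {}"
  by (auto simp: Phi_Ups_def)

lemma Phi_Uphi_eq: "1 \<le> d \<Longrightarrow> Phi_Uphi n d = {(i, j) \<in> Phi_UL n d. d < i}"
  using add_le_if_less_mod_eq[of _ _ d] by (auto simp: Phi_Uphi_def Phi_UL_def)

lemma Phi_Ups_eq: "Phi_Ups n d = {(i, j) \<in> Phi_UL n d. i \<le> d}"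
  using add_le_if_less_mod_eq[of _ _ d] by (fastforce simp: Phi_Ups_def Phi_UL_def)

lemma U_L_eq_pattern_group: "U_L n d = pattern_group n (Phi_UL n d)"
  unfolding U_L_def
  by (rule generate_root_subgroups_eq_pattern_group[OF Phi_UL_subset_upper_positions trans_Phi_UL])

lemma U_phi_eq_pattern_group: "1 \<le> d \<Longrightarrow> U_phi n d = pattern_group n (Phi_Uphi n d)"
  unfolding U_phi_def
  by (rule generate_root_subgroups_eq_pattern_group[OF Phi_Uphi_subset_upper_positions trans_Phi_Uphi])

lemma Upsilon_eq_pattern_group:
  assumes "1 \<le> d"
  shows "Upsilon n d = pattern_group n (Phi_Ups n d)"
proof -
  have "finite (Phi_Ups n d)"
    using finite_subset[OF Phi_Ups_subset_upper_positions[OF assms] finite_upper_positions] .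
  then show ?thesis
    unfolding Upsilon_def
    using foldr_set_mult_root_subgroups[OF Phi_Ups_subset_upper_positions[OF assms, of n] Domain_Int_Range_Phi_Ups,
        of "sorted_list_of_set (Phi_Ups n d)"]
    by simp
qed

lemma U_phi_eq_bottom_pattern_group:
  "1 \<le> d \<Longrightarrow> U_phi n d = pattern_group n {(i, j) \<in> Phi_UL n d. d < i}"
  by (simp add: U_phi_eq_pattern_group Phi_Uphi_eq)

lemma Upsilon_eq_top_pattern_group:
  "1 \<le> d \<Longrightarrow> Upsilon n d = pattern_group n {(i, j) \<in> Phi_UL n d. i \<le> d}"
  by (simp add: Upsilon_eq_pattern_group Phi_Ups_eq)

lemma subgroup_U_L: "subgroup (U_L n d :: (nat \<Rightarrow> nat \<Rightarrow> 'a::field) set) (GLn n)"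
  unfolding U_L_eq_pattern_group
  by (rule subgroup_pattern_group[OF Phi_UL_subset_upper_positions trans_Phi_UL])

lemma subgroup_U_phi: "1 \<le> d \<Longrightarrow> subgroup (U_phi n d :: (nat \<Rightarrow> nat \<Rightarrow> 'a::field) set) (GLn n)"
  unfolding U_phi_eq_pattern_group
  by (rule subgroup_pattern_group[OF Phi_Uphi_subset_upper_positions trans_Phi_Uphi])

lemma subgroup_Upsilon: "1 \<le> d \<Longrightarrow> subgroup (Upsilon n d :: (nat \<Rightarrow> nat \<Rightarrow> 'a::field) set) (GLn n)"
  unfolding Upsilon_eq_pattern_group
  by (rule subgroup_pattern_group[OF Phi_Ups_subset_upper_positions
        trans_if_Domain_Int_Range_empty[OF Domain_Int_Range_Phi_Ups]])

lemma Upsilon_mult_commute: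
  "1 \<le> d \<Longrightarrow> x \<in> Upsilon n d \<Longrightarrow> y \<in> Upsilon n d \<Longrightarrow> mat_mul n x y = mat_mul n y x"
  unfolding Upsilon_eq_pattern_group by (rule pattern_group_mult_commute[OF Domain_Int_Range_Phi_Ups])

lemma U_phi_subset_U_L: "1 \<le> d \<Longrightarrow> U_phi n d \<subseteq> U_L n d"
  unfolding U_phi_eq_bottom_pattern_group U_L_eq_pattern_group by (rule pattern_group_mono) blast

lemma Upsilon_subset_U_L: "1 \<le> d \<Longrightarrow> Upsilon n d \<subseteq> U_L n d"
  unfolding Upsilon_eq_top_pattern_group U_L_eq_pattern_group by (rule pattern_group_mono) blast

lemma Upsilon_normal_U_L:
  "1 \<le> d \<Longrightarrow> (Upsilon n d :: (nat \<Rightarrow> nat \<Rightarrow> 'a::field) set) \<lhd> GLn n\<lparr>carrier := U_L n d\<rparr>"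
  unfolding Upsilon_eq_top_pattern_group U_L_eq_pattern_group
  by (rule top_rows_pattern_group_normal[OF Phi_UL_subset_upper_positions trans_Phi_UL])

lemma U_phi_Int_Upsilon: "1 \<le> d \<Longrightarrow> U_phi n d \<inter> Upsilon n d = {mat_one n}"
  unfolding U_phi_eq_bottom_pattern_group Upsilon_eq_top_pattern_group
  by (rule bottom_Int_top_pattern_groups)

lemma set_mult_U_phi_Upsilon:
  "1 \<le> d \<Longrightarrow> set_mult (GLn n) (U_phi n d) (Upsilon n d) = (U_L n d :: (nat \<Rightarrow> nat \<Rightarrow> 'a::field) set)"
  unfolding U_phi_eq_bottom_pattern_group Upsilon_eq_top_pattern_group U_L_eq_pattern_group
  by (rule set_mult_bottom_top_pattern_groups[OF Phi_UL_subset_upper_positions trans_Phi_UL])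

section \<open>Roots\<close>

lemma root_char_add_root_char: "(\<lambda>k. root_char (a, b) k + root_char (b, c) k) = root_char (a, c)"
  by (simp add: root_char_def fun_eq_iff)

lemma root_char_in_roots_GL: "i \<in> {1..n} \<Longrightarrow> j \<in> {1..n} \<Longrightarrow> i \<noteq> j \<Longrightarrow> root_char (i, j) \<in> roots_GL n"
  by (auto simp: roots_GL_def)

lemma root_sum_in_roots_GL_imp:
  assumes "a \<noteq> b" and "i \<noteq> j"
    and sum: "(\<lambda>k. root_char (a, b) k + root_char (i, j) k) \<in> roots_GL n"
  shows "b = i \<or> a = j"
proof (rule ccontr)
  \<comment> \<open>Otherwise the sum has coefficient 2 at a = i, or positive coefficients at both a \<noteq> i and i.\<close>
  assume "\<not> (b = i \<or> a = j)"
  then have "b \<noteq> i" "a \<noteq> j" by auto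
  obtain u v where "u \<noteq> v" and uv: "(\<lambda>k. root_char (a, b) k + root_char (i, j) k) = root_char (u, v)"
    using sum by (auto simp: roots_GL_def)
  have at_a: "1 + (if a = i then 1 else 0) = root_char (u, v) a"
    using fun_cong[OF uv, of a] \<open>a \<noteq> b\<close> \<open>a \<noteq> j\<close> by (simp add: root_char_def)
  have at_i: "(if i = a then 1 else 0) + 1 = root_char (u, v) i"
    using fun_cong[OF uv, of i] \<open>b \<noteq> i\<close> \<open>i \<noteq> j\<close> by (simp add: root_char_def)
  show False
    using at_a at_i \<open>u \<noteq> v\<close> by (simp add: root_char_def split: if_splits)
qed

lemma Phi_Ups_partner_root_sum:
  assumes ij: "(i, j) \<in> Phi_Uphi n d" and p: "p \<in> {1..d}" "p mod d = i mod d"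
  shows "(p, i) \<in> Phi_Ups n d
       \<and> (\<lambda>k. root_char (p, i) k + root_char (i, j) k) \<in> roots_GL n
       \<and> (\<lambda>k. root_char (p, i) k + root_char (i, j) k) = root_char (p, j)"
proof -
  have "p < i" using ij p(1) by (simp add: Phi_Uphi_def)
  then have "p + d \<le> i" using add_le_if_less_mod_eq p(2) by blast
  then have "(p, i) \<in> Phi_Ups n d" and "root_char (p, j) \<in> roots_GL n"
    using ij p by (auto simp: Phi_Ups_def Phi_Uphi_def intro: root_char_in_roots_GL)
  then show ?thesis by (simp add: root_char_add_root_char)
qed

lemma Phi_Ups_root_sum_unique:
  assumes ij: "(i, j) \<in> Phi_Uphi n d" and p: "p \<in> {1..d}" "p mod d = i mod d"
    and ab: "(a, b) \<in> Phi_Ups n d"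
    and sum: "(\<lambda>k. root_char (a, b) k + root_char (i, j) k) \<in> roots_GL n"
  shows "(a, b) = (p, i)"
proof -
  have a: "a \<in> {1..d}" and "a < b" and "b mod d = a mod d" and "a \<noteq> j"
    using ab ij by (auto simp: Phi_Ups_def Phi_Uphi_def)
  moreover have "i \<noteq> j" using ij p(1) by (auto simp: Phi_Uphi_def)
  ultimately have "b = i" using root_sum_in_roots_GL_imp[OF _ _ sum] by auto
  then have "a = p"
    using inj_onD[OF inj_on_mod_atLeastAtMost _ a p(1)] p(2) \<open>b mod d = a mod d\<close> by simp
  then show ?thesis using \<open>b = i\<close> by simp
qed

lemma ex1_Phi_Ups_root_sum:
  assumes "1 \<le> d" and ij: "(i, j) \<in> Phi_Uphi n d"
  shows "\<exists>!\<alpha>. \<alpha> \<in> Phi_Ups n d \<and> (\<lambda>k. root_char \<alpha> k + root_char (i, j) k) \<in> roots_GL n"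
proof -
  obtain p where p: "p \<in> {1..d}" "p mod d = i mod d"
    using ex_mod_representative[OF assms(1)] by blast
  show ?thesis
  proof (rule ex1I)
    show "(p, i) \<in> Phi_Ups n d \<and> (\<lambda>k. root_char (p, i) k + root_char (i, j) k) \<in> roots_GL n"
      using Phi_Ups_partner_root_sum[OF ij p] by blast
  next
    fix \<alpha> assume "\<alpha> \<in> Phi_Ups n d \<and> (\<lambda>k. root_char \<alpha> k + root_char (i, j) k) \<in> roots_GL n"
    then show "\<alpha> = (p, i)"
      using Phi_Ups_root_sum_unique[OF ij p] by (cases \<alpha>) blast
  qed
qed

lemma Phi_Uphi_root_partners:
  assumes "1 \<le> d"
  shows "\<forall>i j. (i, j) \<in> Phi_Uphi n d \<longrightarrow>
            (\<exists>!\<alpha>. \<alpha> \<in> Phi_Ups n d \<and> (\<lambda>k. root_char \<alpha> k + root_char (i, j) k) \<in> roots_GL n)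
          \<and> (\<forall>p. p \<in> {1..d} \<and> p mod d = i mod d \<longrightarrow>
               (p, i) \<in> Phi_Ups n d
             \<and> (\<lambda>k. root_char (p, i) k + root_char (i, j) k) \<in> roots_GL n
             \<and> (\<lambda>k. root_char (p, i) k + root_char (i, j) k) = root_char (p, j))"
  by (intro allI impI conjI) (use ex1_Phi_Ups_root_sum[OF assms] Phi_Ups_partner_root_sum in blast)+

theorem lemma10p1:
  fixes n d :: nat
  assumes "1 \<le> d" and "d \<le> n"
  defines "G \<equiv> (GLn n :: (nat \<Rightarrow> nat \<Rightarrow> 'a::field) monoid)"
  shows "subgroup (U_L n d) G
       \<and> subgroup (Upsilon n d) G
       \<and> Upsilon n d \<subseteq> U_L n d
       \<and> (\<forall>x\<in>Upsilon n d. \<forall>y\<in>Upsilon n d. x \<otimes>\<^bsub>G\<^esub> y = y \<otimes>\<^bsub>G\<^esub> x)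
       \<and> Upsilon n d \<lhd> (G\<lparr>carrier := U_L n d\<rparr>)
       \<and> subgroup (U_phi n d) G
       \<and> U_phi n d \<subseteq> U_L n d
       \<and> U_phi n d \<inter> Upsilon n d = {\<one>\<^bsub>G\<^esub>}
       \<and> set_mult G (U_phi n d) (Upsilon n d) = U_L n d
       \<and> (\<forall>i j. (i, j) \<in> Phi_Uphi n d \<longrightarrow>
            (\<exists>!\<alpha>. \<alpha> \<in> Phi_Ups n d \<and> (\<lambda>k. root_char \<alpha> k + root_char (i, j) k) \<in> roots_GL n)
          \<and> (\<forall>p. p \<in> {1..d} \<and> p mod d = i mod d \<longrightarrow>
               (p, i) \<in> Phi_Ups n d
             \<and> (\<lambda>k. root_char (p, i) k + root_char (i, j) k) \<in> roots_GL n
             \<and> (\<lambda>k. root_char (p, i) k + root_char (i, j) k) = root_char (p, j)))"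
proof -
  have "\<forall>x\<in>Upsilon n d. \<forall>y\<in>Upsilon n d. x \<otimes>\<^bsub>G\<^esub> y = y \<otimes>\<^bsub>G\<^esub> x"
    unfolding G_def using Upsilon_mult_commute[OF assms(1)] by simp blast
  then show ?thesis
    using subgroup_U_L subgroup_Upsilon[OF assms(1)] Upsilon_subset_U_L[OF assms(1)]
      Upsilon_normal_U_L[OF assms(1)] subgroup_U_phi[OF assms(1)] U_phi_subset_U_L[OF assms(1)]
      U_phi_Int_Upsilon[OF assms(1)] set_mult_U_phi_Upsilon[OF assms(1)]
      Phi_Uphi_root_partners[OF assms(1)]
    unfolding G_def one_GLn by - (intro conjI, assumption+)
qed

end
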